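(* Let $k\in\mathbb{N}$, let $A\subseteq\mathbb{N}$ with $\min(A)=0$ and $\max(A)\le k$, and suppose $A=B+C$ with $B,C\subseteq\mathbb{N}$ and $\max(B)\le\max(C)$. Define \[C_B=C\cup\{s\in\{0,\ldots,k\}\setminus A: s<\max(B)\}\cup\{s-\max(B): s\in\{0,\ldots,k\}\setminus A,\ s\ge\max(B)\}.\] Then $B+C_B=\{0,1,\ldots,k\}$.
   Context: $\mathbb{N}=\{0,1,\ldots\}$ and $X+Y=\{x+y:x\in X,y\in Y\}$. *)

theory Defs
  imports Main
begin

definition sumset :: "nat set \<Rightarrow> nat set \<Rightarrow> nat set" where
  "sumset X Y = {x + y | x y. x \<in> X \<and> y \<in> Y}"

end

theory Submission
  imports Defs
begin

(* Since 0 = min A and A = B + C, both B and C contain 0, so B, C \<subseteq> A; in particular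
   max B + max C \<in> A, whence 2 max B \<le> k. Every s \<in> {0..k} - A is then hit by B + C_B,
   as 0 + s if s < max B and as max B + (s - max B) otherwise, and neither kind of new
   summand leaves {0..k}: x + s < 2 max B \<le> k in the first case, x + (s - max B) \<le> s
   in the second. *)

lemma sumset_Un_right: "sumset X (Y \<union> Z) = sumset X Y \<union> sumset X Z"
  unfolding sumset_def by blast

lemma zero_in_sumset_iff: "0 \<in> sumset X Y \<longleftrightarrow> 0 \<in> X \<and> 0 \<in> Y"
  unfolding sumset_def by force

lemma subset_sumset_left: "0 \<in> Y \<Longrightarrow> X \<subseteq> sumset X Y"
  unfolding sumset_def by force

lemma subset_sumset_right: "0 \<in> X \<Longrightarrow> Y \<subseteq> sumset X Y"
  unfolding sumset_def by force

lemma Max_add_Max_in_sumset: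
  assumes "finite X" "X \<noteq> {}" "finite Y" "Y \<noteq> {}"
  shows "Max X + Max Y \<in> sumset X Y"
  using assms Max_in unfolding sumset_def by blast

lemma sumset_below_Max_subset:
  assumes "finite B"
  shows "sumset B {s \<in> S. s < Max B} \<subseteq> {..<2 * Max B}"
  using assms unfolding sumset_def by (auto dest: Max_ge)

lemma sumset_shifted_by_Max_subset:
  assumes "finite B" "S \<subseteq> {..k}"
  shows "sumset B {s - Max B | s. s \<in> S \<and> Max B \<le> s} \<subseteq> {..k}"
proof
  fix t assume "t \<in> sumset B {s - Max B | s. s \<in> S \<and> Max B \<le> s}"
  then obtain x s where "x \<in> B" "s \<in> S" "Max B \<le> s" "t = x + (s - Max B)"
    unfolding sumset_def by blast
  moreover have "x \<le> Max B" using \<open>finite B\<close> \<open>x \<in> B\<close> by simp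
  ultimately show "t \<in> {..k}" using assms(2) by auto
qed

lemma subset_sumset_split_at_Max:
  assumes "finite B" "0 \<in> B"
  shows "S \<subseteq> sumset B ({s \<in> S. s < Max B} \<union> {s - Max B | s. s \<in> S \<and> Max B \<le> s})"
proof
  fix s assume "s \<in> S"
  have "Max B \<in> B" using assms Max_in by blast
  show "s \<in> sumset B ({s \<in> S. s < Max B} \<union> {s - Max B | s. s \<in> S \<and> Max B \<le> s})"
  proof (cases "s < Max B")
    case True
    then show ?thesis using \<open>s \<in> S\<close> \<open>0 \<in> B\<close> unfolding sumset_def by force
  next
    case False
    then have "s = Max B + (s - Max B)" "s - Max B \<in> {s - Max B | s. s \<in> S \<and> Max B \<le> s}"
      using \<open>s \<in> S\<close> by auto
    then show ?thesis using \<open>Max B \<in> B\<close> unfolding sumset_def by blast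
  qed
qed

theorem mainTheorem14:
  fixes k :: nat and A B C :: "nat set"
  assumes "finite A" and "A \<noteq> {}"
    and "Min A = 0" and "Max A \<le> k"
    and "A = sumset B C"
    and "Max B \<le> Max C"
  shows "sumset B (C \<union> {s \<in> {0..k} - A. s < Max B}
                     \<union> {s - Max B | s. s \<in> {0..k} - A \<and> s \<ge> Max B}) = {0..k}"
proof -
  let ?L = "{s \<in> {0..k} - A. s < Max B}"
  let ?H = "{s - Max B | s. s \<in> {0..k} - A \<and> s \<ge> Max B}"
  have A_le_k: "A \<subseteq> {0..k}" using assms(1,4) by (auto dest: Max_ge)
  have "0 \<in> B" "0 \<in> C" using assms(1-3,5) Min_in zero_in_sumset_iff by metis+
  then have "B \<subseteq> A" "C \<subseteq> A"
    using assms(5) subset_sumset_left subset_sumset_right by auto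
  then have "finite B" "finite C" using assms(1) finite_subset by auto
  have "Max B + Max C \<in> A"
    using assms(5) Max_add_Max_in_sumset \<open>finite B\<close> \<open>finite C\<close> \<open>0 \<in> B\<close> \<open>0 \<in> C\<close> by blast
  with A_le_k assms(6) have "2 * Max B \<le> k" by auto
  then have "sumset B ?L \<subseteq> {0..k}"
    using sumset_below_Max_subset[OF \<open>finite B\<close>] by fastforce
  moreover have "sumset B ?H \<subseteq> {0..k}"
    unfolding atLeast0AtMost by (rule sumset_shifted_by_Max_subset[OF \<open>finite B\<close>]) auto
  moreover have "{0..k} - A \<subseteq> sumset B ?L \<union> sumset B ?H"
    using subset_sumset_split_at_Max[OF \<open>finite B\<close> \<open>0 \<in> B\<close>, of "{0..k} - A"]
    unfolding sumset_Un_right .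
  moreover have "sumset B (C \<union> ?L \<union> ?H) = A \<union> sumset B ?L \<union> sumset B ?H"
    by (simp add: sumset_Un_right assms(5))
  ultimately show ?thesis using A_le_k by blast
qed

end
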